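(* Fix $K\ge 2$, $L\ge1$ and vectors $\mathbf a=(a_1,\dots,a_L),\mathbf b=(b_1,\dots,b_L)\in\mathbb{R}_+^L$, and let $u=\sum_\ell a_\ell$, $v=\sum_\ell b_\ell$. Consider the weighted stochastic block model with $K$ communities each of size $n$, where each pair of vertices independently receives a color in $\{0,1,\dots,L\}$ distributed as $p_n$ if both endpoints are in the same community and as $q_n$ otherwise, with \[ p_n(0)=1-\frac{u\log n}{n},\quad p_n(\ell)=\frac{a_\ell\log n}{n},\qquad q_n(0)=1-\frac{v\log n}{n},\quad q_n(\ell)=\frac{b_\ell\log n}{n}\quad(1\le\ell\le L). \] If \[ \sum_{\ell=1}^L\big(\sqrt{a_\ell}-\sqrt{b_\ell}\big)^2>1, \] then the maximum likelihood estimator recovers the communities exactly with probability converging to $1$ as $n\to\infty$. *)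

theory Defs
  imports Complex_Main "HOL-Library.FuncSet"
begin

text \<open>Vertices are 0..<K*n; vertex x lies in (true) community x div n.
  Colours are 0..L; a colouring assigns a colour to every unordered pair,
  represented as (x,y) with x < y.\<close>

definition wsbm_pairs :: "nat \<Rightarrow> (nat \<times> nat) set" where
  "wsbm_pairs N = {(x, y). x < y \<and> y < N}"

definition wsbm_colorings :: "nat \<Rightarrow> nat \<Rightarrow> ((nat \<times> nat) \<Rightarrow> nat) set" where
  "wsbm_colorings L N = wsbm_pairs N \<rightarrow>\<^sub>E {0..L}"

text \<open>Colour distribution: c = a gives p_n, c = b gives q_n.\<close>
definition wsbm_dist :: "nat \<Rightarrow> (nat \<Rightarrow> real) \<Rightarrow> nat \<Rightarrow> nat \<Rightarrow> real" where
  "wsbm_dist L c n l =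
     (if l = 0 then 1 - (\<Sum>j=1..L. c j) * ln (real n) / real n
      else c l * ln (real n) / real n)"

definition balanced_partition :: "nat \<Rightarrow> nat \<Rightarrow> (nat \<Rightarrow> nat) \<Rightarrow> bool" where
  "balanced_partition K n \<sigma> \<longleftrightarrow>
     (\<forall>x < K * n. \<sigma> x < K) \<and> (\<forall>k < K. card {x. x < K * n \<and> \<sigma> x = k} = n)"

definition true_partition :: "nat \<Rightarrow> nat \<Rightarrow> nat" where
  "true_partition n x = x div n"

definition same_partition :: "nat \<Rightarrow> (nat \<Rightarrow> nat) \<Rightarrow> (nat \<Rightarrow> nat) \<Rightarrow> bool" where
  "same_partition N \<sigma> \<tau> \<longleftrightarrow> (\<forall>x < N. \<forall>y < N. (\<sigma> x = \<sigma> y \<longleftrightarrow> \<tau> x = \<tau> y))"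

definition wsbm_likelihood ::
  "nat \<Rightarrow> nat \<Rightarrow> (nat \<Rightarrow> real) \<Rightarrow> (nat \<Rightarrow> real) \<Rightarrow> nat \<Rightarrow> (nat \<Rightarrow> nat)
     \<Rightarrow> ((nat \<times> nat) \<Rightarrow> nat) \<Rightarrow> real" where
  "wsbm_likelihood K L a b n \<sigma> G =
     (\<Prod>(x, y) \<in> wsbm_pairs (K * n).
        if \<sigma> x = \<sigma> y then wsbm_dist L a n (G (x, y)) else wsbm_dist L b n (G (x, y)))"

definition mle_exact_recovery ::
  "nat \<Rightarrow> nat \<Rightarrow> (nat \<Rightarrow> real) \<Rightarrow> (nat \<Rightarrow> real) \<Rightarrow> nat \<Rightarrow> ((nat \<times> nat) \<Rightarrow> nat) \<Rightarrow> bool" where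
  "mle_exact_recovery K L a b n G \<longleftrightarrow>
     (\<forall>\<sigma>. balanced_partition K n \<sigma> \<and> \<not> same_partition (K * n) \<sigma> (true_partition n) \<longrightarrow>
        wsbm_likelihood K L a b n \<sigma> G < wsbm_likelihood K L a b n (true_partition n) G)"

text \<open>Probability (under the model with the true communities) that the MLE succeeds.
  The probability of a colouring G is its likelihood under the true partition.\<close>
definition mle_success_prob ::
  "nat \<Rightarrow> nat \<Rightarrow> (nat \<Rightarrow> real) \<Rightarrow> (nat \<Rightarrow> real) \<Rightarrow> nat \<Rightarrow> real" where
  "mle_success_prob K L a b n =
     (\<Sum>G \<in> {G \<in> wsbm_colorings L (K * n). mle_exact_recovery K L a b n G}.
        wsbm_likelihood K L a b n (true_partition n) G)"

end

theory Submission
  imports Defs "HOL-Real_Asymp.Real_Asymp"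
begin

text \<open>
  Fix a wrong balanced partition \<open>\<sigma>\<close> and let \<open>d(\<sigma>)\<close> be the number of vertex pairs whose
  same-community status \<open>\<sigma>\<close> gets wrong. By the Bhattacharyya bound for product distributions,
  the probability that \<open>\<sigma>\<close> is at least as likely as the truth is at most \<open>\<rho> ^ d(\<sigma>)\<close>, where
  \<open>\<rho> = \<Sum>\<^sub>c sqrt (p\<^sub>n c * q\<^sub>n c) \<le> exp (- D log n / (2 n))\<close> and \<open>D = \<Sum>\<^sub>l (sqrt a\<^sub>l - sqrt b\<^sub>l)\<^sup>2\<close>.
  A union bound over \<open>\<sigma>\<close> therefore suffices once \<open>d(\<sigma>)\<close> is bounded below. Either every true
  community keeps a \<open>(1 - \<epsilon>)\<close>-majority in one class of \<open>\<sigma>\<close>; these classes then form a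
  permutation \<open>\<pi>\<close> of the labels, and each of the \<open>m\<close> vertices misplaced relative to \<open>\<pi>\<close> lies in
  at least \<open>2 (1 - \<epsilon>) n\<close> wrong pairs. Or some community is spread out, which alone gives
  \<open>\<epsilon> n\<^sup>2 / 2\<close> wrong pairs. Summing over \<open>\<pi>\<close> and \<open>m\<close>, the partitions of the first kind contribute
  at most \<open>K ^ K ((1 + (K - 1) n powr (- D (1 - \<epsilon>))) ^ (K n) - 1)\<close>, which tends to \<open>0\<close> because
  \<open>D (1 - \<epsilon>) > 1\<close>, and those of the second kind at most \<open>K ^ (K n) exp (- D \<epsilon> n log n / 4)\<close>.
\<close>

section \<open>The Bhattacharyya bound\<close>

lemma real_sqrt_prod: "sqrt (\<Prod>x\<in>A. f x) = (\<Prod>x\<in>A. sqrt (f x))"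
  by (induction A rule: infinite_finite_induct) (auto simp: real_sqrt_mult)

text \<open>Chernoff's bound with exponent \<open>1/2\<close>: on the event \<open>P \<le> Q\<close> one has \<open>P \<le> sqrt (P Q)\<close>,
  and the sum of \<open>sqrt (P Q)\<close> factorises over the product.\<close>

lemma sum_likelier_le_prod_sum_sqrt:
  fixes p q :: "'e \<Rightarrow> 'c \<Rightarrow> real"
  assumes "finite E" "finite C"
    and p: "\<And>e c. e \<in> E \<Longrightarrow> c \<in> C \<Longrightarrow> 0 \<le> p e c"
    and q: "\<And>e c. e \<in> E \<Longrightarrow> c \<in> C \<Longrightarrow> 0 \<le> q e c"
  shows "(\<Sum>G\<in>{G \<in> E \<rightarrow>\<^sub>E C. (\<Prod>e\<in>E. p e (G e)) \<le> (\<Prod>e\<in>E. q e (G e))}. \<Prod>e\<in>E. p e (G e))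
           \<le> (\<Prod>e\<in>E. \<Sum>c\<in>C. sqrt (p e c * q e c))"
proof -
  let ?P = "\<lambda>G. \<Prod>e\<in>E. p e (G e)" and ?Q = "\<lambda>G. \<Prod>e\<in>E. q e (G e)"
  have nonneg: "0 \<le> ?P G" "0 \<le> ?Q G" if "G \<in> E \<rightarrow>\<^sub>E C" for G
    using that by (auto intro!: prod_nonneg p q)
  have "(\<Sum>G\<in>{G \<in> E \<rightarrow>\<^sub>E C. ?P G \<le> ?Q G}. ?P G) \<le> (\<Sum>G\<in>{G \<in> E \<rightarrow>\<^sub>E C. ?P G \<le> ?Q G}. sqrt (?P G * ?Q G))"
  proof (rule sum_mono)
    fix G assume G: "G \<in> {G \<in> E \<rightarrow>\<^sub>E C. ?P G \<le> ?Q G}"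
    then have "?P G = sqrt (?P G * ?P G)"
      using nonneg by simp
    also have "\<dots> \<le> sqrt (?P G * ?Q G)"
      by (intro real_sqrt_le_mono mult_left_mono) (use G nonneg in auto)
    finally show "?P G \<le> sqrt (?P G * ?Q G)" .
  qed
  also have "\<dots> \<le> (\<Sum>G\<in>E \<rightarrow>\<^sub>E C. sqrt (?P G * ?Q G))"
    using assms(1,2) nonneg by (intro sum_mono2) (auto simp: finite_PiE)
  also have "\<dots> = (\<Sum>G\<in>E \<rightarrow>\<^sub>E C. \<Prod>e\<in>E. sqrt (p e (G e) * q e (G e)))"
    by (simp add: prod.distrib[symmetric] real_sqrt_prod)
  also have "\<dots> = (\<Prod>e\<in>E. \<Sum>c\<in>C. sqrt (p e c * q e c))"
    using assms(1,2) by (simp add: prod_sum_PiE)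
  finally show ?thesis .
qed

section \<open>The weighted stochastic block model\<close>

lemma finite_wsbm_pairs: "finite (wsbm_pairs N)"
  unfolding wsbm_pairs_def by (rule finite_subset[of _ "{..<N} \<times> {..<N}"]) auto

lemma finite_wsbm_colorings: "finite (wsbm_colorings L N)"
  unfolding wsbm_colorings_def by (intro finite_PiE finite_wsbm_pairs) auto

lemma sum_wsbm_dist: "(\<Sum>l=0..L. wsbm_dist L c n l) = 1"
proof -
  have "(\<Sum>l=0..L. wsbm_dist L c n l) = wsbm_dist L c n 0 + (\<Sum>l=1..L. c l * ln (real n) / real n)"
    by (simp add: sum.atLeast_Suc_atMost wsbm_dist_def)
  also have "(\<Sum>l=1..L. c l * ln (real n) / real n) = (\<Sum>l=1..L. c l) * ln (real n) / real n"
    by (simp add: sum_divide_distrib sum_distrib_right)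
  finally show ?thesis
    by (simp add: wsbm_dist_def)
qed

lemma wsbm_dist_nonneg:
  assumes "\<forall>l\<in>{1..L}. 0 \<le> c l" and "(\<Sum>l=1..L. c l) * ln (real n) / real n \<le> 1" and "l \<le> L"
  shows "0 \<le> wsbm_dist L c n l"
  using assms by (cases "n = 0") (auto simp: wsbm_dist_def)

text \<open>Since the colour probabilities always sum to one, \<open>p\<^sub>n\<close> and
  \<open>q\<^sub>n\<close> are distributions exactly when they are nonnegative.\<close>

definition wsbm_valid :: "nat \<Rightarrow> (nat \<Rightarrow> real) \<Rightarrow> (nat \<Rightarrow> real) \<Rightarrow> nat \<Rightarrow> bool" where
  "wsbm_valid L a b n \<longleftrightarrow> (\<forall>c\<le>L. 0 \<le> wsbm_dist L a n c \<and> 0 \<le> wsbm_dist L b n c)"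

lemma wsbm_validI:
  assumes "\<forall>l\<in>{1..L}. 0 \<le> a l \<and> 0 \<le> b l"
    and "(\<Sum>l=1..L. a l) * ln (real n) / real n \<le> 1" and "(\<Sum>l=1..L. b l) * ln (real n) / real n \<le> 1"
  shows "wsbm_valid L a b n"
  using assms by (auto simp: wsbm_valid_def intro!: wsbm_dist_nonneg)

definition wsbm_pair_dist ::
  "nat \<Rightarrow> (nat \<Rightarrow> real) \<Rightarrow> (nat \<Rightarrow> real) \<Rightarrow> nat \<Rightarrow> (nat \<Rightarrow> nat) \<Rightarrow> nat \<times> nat \<Rightarrow> nat \<Rightarrow> real" where
  "wsbm_pair_dist L a b n \<sigma> e = (if \<sigma> (fst e) = \<sigma> (snd e) then wsbm_dist L a n else wsbm_dist L b n)"

lemma wsbm_likelihood_eq_prod: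
  "wsbm_likelihood K L a b n \<sigma> G = (\<Prod>e\<in>wsbm_pairs (K * n). wsbm_pair_dist L a b n \<sigma> e (G e))"
  unfolding wsbm_likelihood_def wsbm_pair_dist_def by (rule prod.cong) (auto simp: split_beta)

lemma wsbm_likelihood_nonneg:
  assumes "wsbm_valid L a b n" and "G \<in> wsbm_colorings L (K * n)"
  shows "0 \<le> wsbm_likelihood K L a b n \<sigma> G"
  unfolding wsbm_likelihood_eq_prod
proof (rule prod_nonneg)
  fix e assume "e \<in> wsbm_pairs (K * n)"
  then have "G e \<le> L"
    using assms(2) by (auto simp: wsbm_colorings_def)
  then show "0 \<le> wsbm_pair_dist L a b n \<sigma> e (G e)"
    using assms(1) by (simp add: wsbm_pair_dist_def wsbm_valid_def)
qed

lemma sum_wsbm_likelihood: "(\<Sum>G\<in>wsbm_colorings L (K * n). wsbm_likelihood K L a b n \<sigma> G) = 1"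
proof -
  have "(\<Sum>c=0..L. wsbm_pair_dist L a b n \<sigma> e c) = 1" for e
    by (simp add: wsbm_pair_dist_def sum_wsbm_dist)
  then show ?thesis
    unfolding wsbm_likelihood_eq_prod wsbm_colorings_def
    by (subst prod_sum_PiE[symmetric]) (simp_all add: finite_wsbm_pairs)
qed

definition mle_failure_prob :: "nat \<Rightarrow> nat \<Rightarrow> (nat \<Rightarrow> real) \<Rightarrow> (nat \<Rightarrow> real) \<Rightarrow> nat \<Rightarrow> real" where
  "mle_failure_prob K L a b n =
     (\<Sum>G \<in> {G \<in> wsbm_colorings L (K * n). \<not> mle_exact_recovery K L a b n G}.
        wsbm_likelihood K L a b n (true_partition n) G)"

lemma mle_success_prob_eq: "mle_success_prob K L a b n = 1 - mle_failure_prob K L a b n"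
proof -
  have "(\<Sum>G\<in>wsbm_colorings L (K * n). wsbm_likelihood K L a b n (true_partition n) G)
      = mle_success_prob K L a b n + mle_failure_prob K L a b n"
    unfolding mle_success_prob_def mle_failure_prob_def
    using sum.Int_Diff[OF finite_wsbm_colorings, of _ L "K * n" "Collect (mle_exact_recovery K L a b n)"]
    by (simp add: Int_def set_diff_eq conj_commute)
  then show ?thesis
    by (simp add: sum_wsbm_likelihood)
qed

lemma mle_failure_prob_nonneg: "wsbm_valid L a b n \<Longrightarrow> 0 \<le> mle_failure_prob K L a b n"
  unfolding mle_failure_prob_def by (auto intro!: sum_nonneg wsbm_likelihood_nonneg)

definition disagreement_pairs :: "nat \<Rightarrow> nat \<Rightarrow> (nat \<Rightarrow> nat) \<Rightarrow> (nat \<times> nat) set" where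
  "disagreement_pairs K n \<sigma> =
     {(x, y) \<in> wsbm_pairs (K * n). (\<sigma> x = \<sigma> y) \<noteq> (true_partition n x = true_partition n y)}"

lemma disagreement_pairs_subset: "disagreement_pairs K n \<sigma> \<subseteq> wsbm_pairs (K * n)"
  unfolding disagreement_pairs_def by auto

lemma finite_disagreement_pairs: "finite (disagreement_pairs K n \<sigma>)"
  using disagreement_pairs_subset finite_wsbm_pairs by (rule finite_subset)

definition wsbm_bhattacharyya :: "nat \<Rightarrow> (nat \<Rightarrow> real) \<Rightarrow> (nat \<Rightarrow> real) \<Rightarrow> nat \<Rightarrow> real" where
  "wsbm_bhattacharyya L a b n = (\<Sum>c=0..L. sqrt (wsbm_dist L a n c * wsbm_dist L b n c))"

lemma wsbm_bhattacharyya_nonneg: "wsbm_valid L a b n \<Longrightarrow> 0 \<le> wsbm_bhattacharyya L a b n"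
  unfolding wsbm_bhattacharyya_def wsbm_valid_def by (auto intro!: sum_nonneg)

lemma sum_sqrt_wsbm_pair_dist:
  assumes "wsbm_valid L a b n" and "e \<in> wsbm_pairs (K * n)"
  shows "(\<Sum>c=0..L. sqrt (wsbm_pair_dist L a b n (true_partition n) e c * wsbm_pair_dist L a b n \<sigma> e c))
     = (if e \<in> disagreement_pairs K n \<sigma> then wsbm_bhattacharyya L a b n else 1)"
proof (cases "e \<in> disagreement_pairs K n \<sigma>")
  case True
  then show ?thesis
    using assms by (auto simp: disagreement_pairs_def wsbm_pair_dist_def wsbm_bhattacharyya_def mult.commute)
next
  case False
  then have "wsbm_pair_dist L a b n (true_partition n) e = wsbm_pair_dist L a b n \<sigma> e"
    using assms(2) by (auto simp: disagreement_pairs_def wsbm_pair_dist_def)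
  moreover have "sqrt (wsbm_pair_dist L a b n \<sigma> e c * wsbm_pair_dist L a b n \<sigma> e c) = wsbm_pair_dist L a b n \<sigma> e c"
    if "c \<in> {0..L}" for c
    using assms(1) that by (simp add: wsbm_pair_dist_def wsbm_valid_def)
  ultimately show ?thesis
    using False by (simp add: wsbm_pair_dist_def sum_wsbm_dist)
qed

lemma wsbm_pairwise_error_le:
  assumes "wsbm_valid L a b n"
  shows "(\<Sum>G\<in>{G \<in> wsbm_colorings L (K * n).
              wsbm_likelihood K L a b n (true_partition n) G \<le> wsbm_likelihood K L a b n \<sigma> G}.
            wsbm_likelihood K L a b n (true_partition n) G)
         \<le> wsbm_bhattacharyya L a b n ^ card (disagreement_pairs K n \<sigma>)"
proof -
  have "(\<Sum>G\<in>{G \<in> wsbm_colorings L (K * n).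
              wsbm_likelihood K L a b n (true_partition n) G \<le> wsbm_likelihood K L a b n \<sigma> G}.
            wsbm_likelihood K L a b n (true_partition n) G)
      \<le> (\<Prod>e\<in>wsbm_pairs (K * n). \<Sum>c=0..L.
            sqrt (wsbm_pair_dist L a b n (true_partition n) e c * wsbm_pair_dist L a b n \<sigma> e c))"
    unfolding wsbm_likelihood_eq_prod wsbm_colorings_def
    by (rule sum_likelier_le_prod_sum_sqrt)
      (use assms in \<open>auto simp: finite_wsbm_pairs wsbm_valid_def wsbm_pair_dist_def\<close>)
  also have "\<dots> = (\<Prod>e\<in>wsbm_pairs (K * n).
                    if e \<in> disagreement_pairs K n \<sigma> then wsbm_bhattacharyya L a b n else 1)"
    using assms by (simp add: sum_sqrt_wsbm_pair_dist)
  also have "\<dots> = wsbm_bhattacharyya L a b n ^ card (disagreement_pairs K n \<sigma>)"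
    by (simp add: prod.If_cases finite_wsbm_pairs Int_absorb1[OF disagreement_pairs_subset])
  finally show ?thesis .
qed

text \<open>Taking only extensional labellings makes the set finite; the likelihood and the
  recovery criterion see only the labels below \<open>K * n\<close>.\<close>

definition wrong_partitions :: "nat \<Rightarrow> nat \<Rightarrow> (nat \<Rightarrow> nat) set" where
  "wrong_partitions K n = {\<sigma> \<in> {..<K * n} \<rightarrow>\<^sub>E {..<K}.
     balanced_partition K n \<sigma> \<and> \<not> same_partition (K * n) \<sigma> (true_partition n)}"

lemma finite_wrong_partitions: "finite (wrong_partitions K n)"
  unfolding wrong_partitions_def by (simp add: finite_PiE)

lemma restrict_mem_wrong_partitions:
  assumes "balanced_partition K n \<sigma>" and "\<not> same_partition (K * n) \<sigma> (true_partition n)"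
  shows "restrict \<sigma> {..<K * n} \<in> wrong_partitions K n"
proof -
  have "{x. x < K * n \<and> restrict \<sigma> {..<K * n} x = k} = {x. x < K * n \<and> \<sigma> x = k}" for k
    by auto
  then show ?thesis
    using assms by (auto simp: wrong_partitions_def balanced_partition_def same_partition_def)
qed

lemma wsbm_likelihood_restrict:
  "wsbm_likelihood K L a b n (restrict \<sigma> {..<K * n}) G = wsbm_likelihood K L a b n \<sigma> G"
  unfolding wsbm_likelihood_def by (rule prod.cong) (auto simp: wsbm_pairs_def)

lemma mle_failure_prob_le_sum_pow:
  assumes "wsbm_valid L a b n"
  shows "mle_failure_prob K L a b n
           \<le> (\<Sum>\<sigma>\<in>wrong_partitions K n. wsbm_bhattacharyya L a b n ^ card (disagreement_pairs K n \<sigma>))"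
proof -
  let ?C = "wsbm_colorings L (K * n)"
  let ?L = "wsbm_likelihood K L a b n"
  let ?Ltrue = "?L (true_partition n)"
  let ?T = "\<lambda>G \<sigma>. if ?Ltrue G \<le> ?L \<sigma> G then ?Ltrue G else 0"
  have nonneg: "0 \<le> ?Ltrue G" if "G \<in> ?C" for G
    using assms that by (rule wsbm_likelihood_nonneg)
  have union_bound: "?Ltrue G \<le> (\<Sum>\<sigma>\<in>wrong_partitions K n. ?T G \<sigma>)"
    if G: "G \<in> ?C" and fails: "\<not> mle_exact_recovery K L a b n G" for G
  proof -
    obtain \<sigma> where \<sigma>: "balanced_partition K n \<sigma>" "\<not> same_partition (K * n) \<sigma> (true_partition n)"
      and "?Ltrue G \<le> ?L \<sigma> G"
      using fails by (auto simp: mle_exact_recovery_def not_less)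
    then have "?Ltrue G = ?T G (restrict \<sigma> {..<K * n})"
      by (simp add: wsbm_likelihood_restrict)
    also have "\<dots> \<le> (\<Sum>\<sigma>\<in>wrong_partitions K n. ?T G \<sigma>)"
      using nonneg[OF G]
      by (intro member_le_sum restrict_mem_wrong_partitions[OF \<sigma>] finite_wrong_partitions) auto
    finally show ?thesis .
  qed
  have "mle_failure_prob K L a b n
      \<le> (\<Sum>G\<in>{G\<in>?C. \<not> mle_exact_recovery K L a b n G}. \<Sum>\<sigma>\<in>wrong_partitions K n. ?T G \<sigma>)"
    unfolding mle_failure_prob_def using union_bound by (intro sum_mono) auto
  also have "\<dots> \<le> (\<Sum>G\<in>?C. \<Sum>\<sigma>\<in>wrong_partitions K n. ?T G \<sigma>)"
    using nonneg by (intro sum_mono2 finite_wsbm_colorings) (auto intro!: sum_nonneg)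
  also have "\<dots> = (\<Sum>\<sigma>\<in>wrong_partitions K n. \<Sum>G\<in>{G\<in>?C. ?Ltrue G \<le> ?L \<sigma> G}. ?Ltrue G)"
    by (subst sum.swap) (simp add: sum.inter_filter finite_wsbm_colorings)
  also have "\<dots> \<le> (\<Sum>\<sigma>\<in>wrong_partitions K n. wsbm_bhattacharyya L a b n ^ card (disagreement_pairs K n \<sigma>))"
    using assms by (intro sum_mono wsbm_pairwise_error_le)
  finally show ?thesis .
qed

section \<open>Counting disagreeing pairs\<close>

lemma card_le_twice_card_increasing:
  fixes R :: "('a::linorder \<times> 'a) set"
  assumes "finite R" and sym: "\<And>x y. (x, y) \<in> R \<Longrightarrow> x \<noteq> y \<and> (y, x) \<in> R"
  shows "card R \<le> 2 * card {(x, y) \<in> R. x < y}"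
proof -
  let ?I = "{(x, y) \<in> R. x < y}"
  have fin: "finite ?I"
    using assms(1) by (rule finite_subset[rotated]) auto
  have "R \<subseteq> ?I \<union> prod.swap ` ?I"
  proof
    fix p assume "p \<in> R"
    then obtain x y where p: "p = (x, y)" "(x, y) \<in> R"
      by (cases p) auto
    then have "x < y \<or> y < x" "(y, x) \<in> R"
      using sym[OF p(2)] linorder_neq_iff by blast+
    then show "p \<in> ?I \<union> prod.swap ` ?I"
      using p by (auto simp: image_iff)
  qed
  then have "card R \<le> card (?I \<union> prod.swap ` ?I)"
    using fin by (intro card_mono) simp_all
  also have "\<dots> \<le> card ?I + card (prod.swap ` ?I)"
    by (rule card_Un_le)
  also have "\<dots> \<le> 2 * card ?I"
    using card_image_le[OF fin, of prod.swap] by simp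
  finally show ?thesis .
qed

definition block_overlap :: "nat \<Rightarrow> nat \<Rightarrow> (nat \<Rightarrow> nat) \<Rightarrow> nat \<Rightarrow> nat \<Rightarrow> nat" where
  "block_overlap K n \<sigma> i j = card {x. x < K * n \<and> x div n = i \<and> \<sigma> x = j}"

lemma true_block_eq:
  fixes n K i :: nat
  assumes "0 < n" and "i < K"
  shows "{x. x < K * n \<and> x div n = i} = {i * n..<i * n + n}"
proof (intro equalityI subsetI)
  fix x assume "x \<in> {x. x < K * n \<and> x div n = i}"
  then show "x \<in> {i * n..<i * n + n}"
    using div_times_less_eq_dividend[of x n] dividend_less_div_times[OF assms(1), of x] by auto
next
  fix x assume x: "x \<in> {i * n..<i * n + n}"
  have "i * n + n \<le> K * n"
    using assms(2) by (metis Suc_leI add.commute mult_Suc mult_le_mono1)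
  moreover have "x div n = i"
    using x by (intro div_nat_eqI) (auto simp: mult.commute)
  ultimately show "x \<in> {x. x < K * n \<and> x div n = i}"
    using x by auto
qed

lemma card_true_block:
  fixes n K i :: nat
  shows "0 < n \<Longrightarrow> i < K \<Longrightarrow> card {x. x < K * n \<and> x div n = i} = n"
  by (simp add: true_block_eq)

lemma card_block_split:
  fixes n K i :: nat
  assumes "0 < n" and "i < K"
  shows "card {y. y < K * n \<and> y div n = i \<and> \<sigma> y \<noteq> j} + block_overlap K n \<sigma> i j = n"
proof -
  have "card ({y. y < K * n \<and> y div n = i \<and> \<sigma> y \<noteq> j} \<union> {y. y < K * n \<and> y div n = i \<and> \<sigma> y = j})
      = card {y. y < K * n \<and> y div n = i \<and> \<sigma> y \<noteq> j} + card {y. y < K * n \<and> y div n = i \<and> \<sigma> y = j}"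
    by (intro card_Un_disjoint) auto
  moreover have "{y. y < K * n \<and> y div n = i \<and> \<sigma> y \<noteq> j} \<union> {y. y < K * n \<and> y div n = i \<and> \<sigma> y = j}
      = {y. y < K * n \<and> y div n = i}"
    by auto
  ultimately show ?thesis
    using card_true_block[OF assms] by (simp add: block_overlap_def)
qed

lemma card_disagreement_pairs_if_spread:
  fixes \<epsilon> :: real
  assumes "0 < n" and "i < K" and labels: "\<forall>x<K * n. \<sigma> x < K"
    and spread: "\<forall>j<K. real (block_overlap K n \<sigma> i j) < (1 - \<epsilon>) * n"
  shows "\<epsilon> * n * n \<le> 2 * real (card (disagreement_pairs K n \<sigma>))"
proof -
  define B where "B = {x. x < K * n \<and> x div n = i}"
  define R where "R = (SIGMA x:B. {y. y < K * n \<and> y div n = i \<and> \<sigma> y \<noteq> \<sigma> x})"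
  have "finite B"
    by (simp add: B_def)
  have others: "\<epsilon> * n \<le> real (card {y. y < K * n \<and> y div n = i \<and> \<sigma> y \<noteq> \<sigma> x})" if "x \<in> B" for x
  proof -
    have "card {y. y < K * n \<and> y div n = i \<and> \<sigma> y \<noteq> \<sigma> x} + block_overlap K n \<sigma> i (\<sigma> x) = n"
      using assms(1,2) by (rule card_block_split)
    moreover have "real (block_overlap K n \<sigma> i (\<sigma> x)) < (1 - \<epsilon>) * n"
      using that labels spread by (auto simp: B_def)
    ultimately show ?thesis
      by (simp add: algebra_simps flip: of_nat_add)
  qed
  have "(\<Sum>x\<in>B. \<epsilon> * n) \<le> (\<Sum>x\<in>B. real (card {y. y < K * n \<and> y div n = i \<and> \<sigma> y \<noteq> \<sigma> x}))"
    using others by (rule sum_mono)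
  also have "\<dots> = real (card R)"
    unfolding R_def using \<open>finite B\<close> by (simp add: card_SigmaI)
  finally have "\<epsilon> * n * n \<le> real (card R)"
    using card_true_block[OF assms(1,2)] by (simp add: B_def algebra_simps)
  moreover have "card R \<le> 2 * card {(x, y) \<in> R. x < y}"
  proof (rule card_le_twice_card_increasing)
    show "finite R"
      unfolding R_def using \<open>finite B\<close> by simp
    show "x \<noteq> y \<and> (y, x) \<in> R" if "(x, y) \<in> R" for x y
      using that by (auto simp: R_def B_def)
  qed
  moreover have "{(x, y) \<in> R. x < y} \<subseteq> disagreement_pairs K n \<sigma>"
  proof
    fix p assume "p \<in> {(x, y) \<in> R. x < y}"
    then obtain x y where "p = (x, y)" "x < y" "x \<in> B" "y < K * n" "y div n = i" "\<sigma> y \<noteq> \<sigma> x"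
      by (auto simp: R_def)
    then show "p \<in> disagreement_pairs K n \<sigma>"
      by (simp add: B_def disagreement_pairs_def wsbm_pairs_def true_partition_def)
  qed
  then have "card {(x, y) \<in> R. x < y} \<le> card (disagreement_pairs K n \<sigma>)"
    by (intro card_mono finite_disagreement_pairs)
  ultimately show ?thesis
    by linarith
qed

text \<open>Two blocks sharing a majority label would put more than \<open>n\<close> vertices into one class.\<close>

lemma inj_on_majority_labels:
  fixes \<epsilon> :: real
  assumes "0 < n" and "\<epsilon> < 1/2" and bal: "balanced_partition K n \<sigma>"
    and labels: "\<forall>i<K. \<pi> i < K"
    and majority: "\<forall>i<K. (1 - \<epsilon>) * n \<le> real (block_overlap K n \<sigma> i (\<pi> i))"
  shows "inj_on \<pi> {..<K}"
proof (rule inj_onI, rule ccontr)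
  fix i i' assume i: "i \<in> {..<K}" and i': "i' \<in> {..<K}" and eq: "\<pi> i = \<pi> i'" and "i \<noteq> i'"
  let ?A = "\<lambda>i. {x. x < K * n \<and> x div n = i \<and> \<sigma> x = \<pi> i'}"
  have "card (?A i) + card (?A i') = card (?A i \<union> ?A i')"
    using \<open>i \<noteq> i'\<close> by (intro card_Un_disjoint[symmetric]) auto
  also have "\<dots> \<le> card {x. x < K * n \<and> \<sigma> x = \<pi> i'}"
    by (rule card_mono) auto
  also have "\<dots> = n"
    using bal labels i' by (auto simp: balanced_partition_def)
  finally have "real (block_overlap K n \<sigma> i (\<pi> i)) + real (block_overlap K n \<sigma> i' (\<pi> i')) \<le> n"
    unfolding block_overlap_def eq by linarith
  moreover have "(1 - \<epsilon>) * n \<le> real (block_overlap K n \<sigma> i (\<pi> i))"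
    and "(1 - \<epsilon>) * n \<le> real (block_overlap K n \<sigma> i' (\<pi> i'))"
    using majority i i' by auto
  ultimately have "(1 - 2 * \<epsilon>) * real n \<le> 0"
    by (simp add: algebra_simps)
  moreover have "0 < (1 - 2 * \<epsilon>) * real n"
    using assms(1,2) by simp
  ultimately show False
    by simp
qed

definition misplaced :: "nat \<Rightarrow> nat \<Rightarrow> (nat \<Rightarrow> nat) \<Rightarrow> (nat \<Rightarrow> nat) \<Rightarrow> nat set" where
  "misplaced K n \<sigma> \<pi> = {x. x < K * n \<and> \<sigma> x \<noteq> \<pi> (x div n)}"

lemma misplaced_nonempty:
  assumes "inj_on \<pi> {..<K}" and "\<not> same_partition (K * n) \<sigma> (true_partition n)"
  shows "misplaced K n \<sigma> \<pi> \<noteq> {}"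
proof
  assume "misplaced K n \<sigma> \<pi> = {}"
  then have "\<sigma> x = \<pi> (x div n)" if "x < K * n" for x
    using that by (auto simp: misplaced_def)
  moreover have "x div n < K" if "x < K * n" for x
    using that by (rule less_mult_imp_div_less)
  ultimately have "same_partition (K * n) \<sigma> (true_partition n)"
    using assms(1) by (auto simp: same_partition_def true_partition_def dest: inj_onD)
  with assms(2) show False ..
qed

definition correct_disagreeing :: "nat \<Rightarrow> nat \<Rightarrow> (nat \<Rightarrow> nat) \<Rightarrow> (nat \<Rightarrow> nat) \<Rightarrow> nat \<Rightarrow> nat set" where
  "correct_disagreeing K n \<sigma> \<pi> x =
     {y. y < K * n \<and> y \<notin> misplaced K n \<sigma> \<pi> \<and> (\<sigma> x = \<sigma> y) \<noteq> (x div n = y div n)}"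

lemma correct_disagreeing_superset:
  assumes x: "x \<in> misplaced K n \<sigma> \<pi>" and "\<pi> i' = \<sigma> x"
  shows "{y. y < K * n \<and> y div n = x div n \<and> \<sigma> y = \<pi> (x div n)}
           \<union> {y. y < K * n \<and> y div n = i' \<and> \<sigma> y = \<pi> i'} \<subseteq> correct_disagreeing K n \<sigma> \<pi> x"
proof
  fix y assume y: "y \<in> {y. y < K * n \<and> y div n = x div n \<and> \<sigma> y = \<pi> (x div n)}
                    \<union> {y. y < K * n \<and> y div n = i' \<and> \<sigma> y = \<pi> i'}"
  have "\<sigma> x \<noteq> \<pi> (x div n)"
    using x by (simp add: misplaced_def)
  have "(\<sigma> x = \<sigma> y) \<noteq> (x div n = y div n)"
  proof (cases "y div n = x div n")
    case True
    with y have "\<sigma> y = \<pi> (x div n)"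
      by auto
    with True \<open>\<sigma> x \<noteq> \<pi> (x div n)\<close> show ?thesis
      by simp
  next
    case False
    with y have "\<sigma> y = \<sigma> x"
      using \<open>\<pi> i' = \<sigma> x\<close> by auto
    with False show ?thesis
      by simp
  qed
  then show "y \<in> correct_disagreeing K n \<sigma> \<pi> x"
    using y by (auto simp: correct_disagreeing_def misplaced_def)
qed

lemma card_correct_disagreeing_ge:
  fixes \<epsilon> :: real
  assumes bal: "balanced_partition K n \<sigma>"
    and labels: "\<forall>i<K. \<pi> i < K" and inj: "inj_on \<pi> {..<K}"
    and majority: "\<forall>i<K. (1 - \<epsilon>) * n \<le> real (block_overlap K n \<sigma> i (\<pi> i))"
    and x: "x \<in> misplaced K n \<sigma> \<pi>"
  shows "2 * (1 - \<epsilon>) * n \<le> real (card (correct_disagreeing K n \<sigma> \<pi> x))"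
proof -
  define i where "i = x div n"
  have "x < K * n" and "\<sigma> x \<noteq> \<pi> i"
    using x by (simp_all add: misplaced_def i_def)
  from this(1) have i: "i < K"
    unfolding i_def by (rule less_mult_imp_div_less)
  have "\<pi> ` {..<K} = {..<K}"
    using labels inj by (intro endo_inj_surj) auto
  moreover have "\<sigma> x < K"
    using \<open>x < K * n\<close> bal by (simp add: balanced_partition_def)
  ultimately obtain i' where i': "i' < K" "\<pi> i' = \<sigma> x"
    by (metis imageE lessThan_iff)
  with \<open>\<sigma> x \<noteq> \<pi> i\<close> have "i \<noteq> i'"
    by auto
  let ?A = "\<lambda>i. {y. y < K * n \<and> y div n = i \<and> \<sigma> y = \<pi> i}"
  have "card (?A i \<union> ?A i') \<le> card (correct_disagreeing K n \<sigma> \<pi> x)"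
    using correct_disagreeing_superset[OF x i'(2)]
    by (intro card_mono) (simp_all add: correct_disagreeing_def i_def)
  moreover have "card (?A i \<union> ?A i') = block_overlap K n \<sigma> i (\<pi> i) + block_overlap K n \<sigma> i' (\<pi> i')"
    unfolding block_overlap_def using \<open>i \<noteq> i'\<close> by (intro card_Un_disjoint) auto
  ultimately have "real (block_overlap K n \<sigma> i (\<pi> i)) + real (block_overlap K n \<sigma> i' (\<pi> i'))
      \<le> real (card (correct_disagreeing K n \<sigma> \<pi> x))"
    by (metis of_nat_add of_nat_mono)
  moreover have "(1 - \<epsilon>) * n \<le> real (block_overlap K n \<sigma> i (\<pi> i))"
    and "(1 - \<epsilon>) * n \<le> real (block_overlap K n \<sigma> i' (\<pi> i'))"
    using majority i i'(1) by auto
  ultimately show ?thesis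
    by linarith
qed

text \<open>Sending an ordered pair to the corresponding unordered one is injective here because
  exactly one of its endpoints is misplaced.\<close>

lemma card_disagreement_pairs_ge_misplaced:
  fixes \<epsilon> :: real
  assumes bal: "balanced_partition K n \<sigma>"
    and labels: "\<forall>i<K. \<pi> i < K" and inj: "inj_on \<pi> {..<K}"
    and majority: "\<forall>i<K. (1 - \<epsilon>) * n \<le> real (block_overlap K n \<sigma> i (\<pi> i))"
  shows "2 * (1 - \<epsilon>) * n * card (misplaced K n \<sigma> \<pi>) \<le> card (disagreement_pairs K n \<sigma>)"
proof -
  define S where "S = misplaced K n \<sigma> \<pi>"
  define P where "P = (SIGMA x:S. correct_disagreeing K n \<sigma> \<pi> x)"
  have "finite S"
    by (simp add: S_def misplaced_def)
  have "(\<Sum>x\<in>S. 2 * (1 - \<epsilon>) * n) \<le> (\<Sum>x\<in>S. real (card (correct_disagreeing K n \<sigma> \<pi> x)))"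
    using card_correct_disagreeing_ge[OF bal labels inj majority] by (intro sum_mono) (simp add: S_def)
  also have "\<dots> = real (card P)"
    unfolding P_def using \<open>finite S\<close> by (simp add: card_SigmaI correct_disagreeing_def)
  finally have P_lower: "2 * (1 - \<epsilon>) * n * card S \<le> real (card P)"
    by (simp add: mult.commute)
  define unordered where "unordered p = (min (fst p) (snd p), max (fst p) (snd p))" for p :: "nat \<times> nat"
  have "inj_on unordered P"
  proof (rule inj_onI)
    fix p q assume "p \<in> P" "q \<in> P" "unordered p = unordered q"
    moreover obtain x y x' y' where "p = (x, y)" "q = (x', y')"
      by (cases p, cases q) auto
    ultimately show "p = q"
      by (auto simp: P_def correct_disagreeing_def S_def unordered_def min_def max_def split: if_splits)
  qed
  moreover have "unordered ` P \<subseteq> disagreement_pairs K n \<sigma>"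
  proof
    fix e assume "e \<in> unordered ` P"
    then obtain x y where "(x, y) \<in> P" "e = unordered (x, y)"
      by auto
    moreover from this(1) have "x \<noteq> y" "x < K * n" "y < K * n" "(\<sigma> x = \<sigma> y) \<noteq> (x div n = y div n)"
      by (auto simp: P_def correct_disagreeing_def S_def misplaced_def)
    ultimately show "e \<in> disagreement_pairs K n \<sigma>"
      by (auto simp: unordered_def disagreement_pairs_def wsbm_pairs_def true_partition_def min_def max_def)
  qed
  ultimately have "card P \<le> card (disagreement_pairs K n \<sigma>)"
    by (intro card_inj_on_le finite_disagreement_pairs)
  with P_lower show ?thesis
    unfolding S_def by linarith
qed

lemma disagreement_pairs_dichotomy:
  fixes \<epsilon> :: real
  assumes "0 < n" and "\<epsilon> < 1/2" and \<sigma>: "\<sigma> \<in> wrong_partitions K n"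
  obtains \<pi> where "\<pi> \<in> {..<K} \<rightarrow>\<^sub>E {..<K}" and "misplaced K n \<sigma> \<pi> \<noteq> {}"
      and "2 * (1 - \<epsilon>) * n * card (misplaced K n \<sigma> \<pi>) \<le> card (disagreement_pairs K n \<sigma>)"
    | "\<epsilon> * n * n \<le> 2 * real (card (disagreement_pairs K n \<sigma>))"
proof (cases "\<forall>i<K. \<exists>j<K. (1 - \<epsilon>) * n \<le> real (block_overlap K n \<sigma> i j)")
  case True
  then obtain f where f: "\<forall>i<K. f i < K \<and> (1 - \<epsilon>) * n \<le> real (block_overlap K n \<sigma> i (f i))"
    by metis
  define \<pi> where "\<pi> = restrict f {..<K}"
  have labels: "\<forall>i<K. \<pi> i < K"
    and majority: "\<forall>i<K. (1 - \<epsilon>) * n \<le> real (block_overlap K n \<sigma> i (\<pi> i))"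
    using f by (simp_all add: \<pi>_def)
  have bal: "balanced_partition K n \<sigma>" and wrong: "\<not> same_partition (K * n) \<sigma> (true_partition n)"
    using \<sigma> by (simp_all add: wrong_partitions_def)
  have inj: "inj_on \<pi> {..<K}"
    using assms(1,2) bal labels majority by (rule inj_on_majority_labels)
  show ?thesis
  proof (rule that(1))
    show "\<pi> \<in> {..<K} \<rightarrow>\<^sub>E {..<K}"
      using labels by (simp add: \<pi>_def)
    show "misplaced K n \<sigma> \<pi> \<noteq> {}"
      using inj wrong by (rule misplaced_nonempty)
    show "2 * (1 - \<epsilon>) * n * card (misplaced K n \<sigma> \<pi>) \<le> card (disagreement_pairs K n \<sigma>)"
      using bal labels inj majority by (rule card_disagreement_pairs_ge_misplaced)
  qed
next
  case False
  then obtain i where "i < K" and "\<forall>j<K. real (block_overlap K n \<sigma> i j) < (1 - \<epsilon>) * n"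
    by (auto simp: not_le)
  moreover have "\<forall>x<K * n. \<sigma> x < K"
    using \<sigma> by (auto simp: wrong_partitions_def balanced_partition_def)
  ultimately show ?thesis
    using that(2) card_disagreement_pairs_if_spread[OF assms(1)] by blast
qed

section \<open>Summing over partitions\<close>

lemma sum_pow_card_misplaced:
  fixes w :: real
  assumes labels: "\<forall>i<K. \<pi> i < K"
  shows "(\<Sum>\<sigma>\<in>{..<K * n} \<rightarrow>\<^sub>E {..<K}. w ^ card (misplaced K n \<sigma> \<pi>)) = (1 + (real K - 1) * w) ^ (K * n)"
proof -
  have pow_eq: "w ^ card (misplaced K n \<sigma> \<pi>) = (\<Prod>x<K * n. if \<sigma> x \<noteq> \<pi> (x div n) then w else 1)" for \<sigma>
  proof -
    have "{..<K * n} \<inter> {x. \<sigma> x \<noteq> \<pi> (x div n)} = misplaced K n \<sigma> \<pi>"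
      by (auto simp: misplaced_def)
    then show ?thesis
      by (simp add: prod.If_cases)
  qed
  have choices: "(\<Sum>j<K. if j \<noteq> \<pi> (x div n) then w else 1) = 1 + (real K - 1) * w" if "x < K * n" for x
  proof -
    have "\<pi> (x div n) < K"
      using labels less_mult_imp_div_less[OF that] by blast
    have "(\<Sum>j<K. if j \<noteq> \<pi> (x div n) then w else 1)
        = (\<Sum>j<K. w) + (\<Sum>j<K. if j = \<pi> (x div n) then 1 - w else 0)"
      by (subst sum.distrib[symmetric]) (rule sum.cong, auto)
    also have "\<dots> = real K * w + (1 - w)"
      using \<open>\<pi> (x div n) < K\<close> by simp
    finally show ?thesis
      by (simp add: algebra_simps)
  qed
  have "(\<Sum>\<sigma>\<in>{..<K * n} \<rightarrow>\<^sub>E {..<K}. w ^ card (misplaced K n \<sigma> \<pi>))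
      = (\<Prod>x<K * n. \<Sum>j<K. if j \<noteq> \<pi> (x div n) then w else 1)"
    by (simp add: pow_eq prod_sum_PiE)
  also have "\<dots> = (1 + (real K - 1) * w) ^ (K * n)"
    using choices by simp
  finally show ?thesis .
qed

text \<open>Exactly one labelling, \<open>x \<mapsto> \<pi> (x div n)\<close>, has no misplaced vertices.\<close>

lemma sum_pow_card_misplaced_nonempty:
  fixes w :: real
  assumes labels: "\<forall>i<K. \<pi> i < K"
  shows "(\<Sum>\<sigma>\<in>{..<K * n} \<rightarrow>\<^sub>E {..<K}. if misplaced K n \<sigma> \<pi> = {} then 0 else w ^ card (misplaced K n \<sigma> \<pi>))
           = (1 + (real K - 1) * w) ^ (K * n) - 1"
proof -
  let ?E = "{..<K * n} \<rightarrow>\<^sub>E {..<K}"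
  define \<sigma>\<pi> where "\<sigma>\<pi> = restrict (\<lambda>x. \<pi> (x div n)) {..<K * n}"
  have "\<sigma>\<pi> \<in> ?E"
    using labels less_mult_imp_div_less by (auto simp: \<sigma>\<pi>_def)
  have empty_iff: "misplaced K n \<sigma> \<pi> = {} \<longleftrightarrow> \<sigma> = \<sigma>\<pi>" if "\<sigma> \<in> ?E" for \<sigma>
    using that by (auto simp: misplaced_def \<sigma>\<pi>_def fun_eq_iff PiE_iff extensional_def)
  have "(\<Sum>\<sigma>\<in>?E. if misplaced K n \<sigma> \<pi> = {} then 0 else w ^ card (misplaced K n \<sigma> \<pi>))
      = (\<Sum>\<sigma>\<in>?E. w ^ card (misplaced K n \<sigma> \<pi>) - (if \<sigma> = \<sigma>\<pi> then 1 else 0))"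
  proof (rule sum.cong)
    fix \<sigma> assume "\<sigma> \<in> ?E"
    then show "(if misplaced K n \<sigma> \<pi> = {} then 0 else w ^ card (misplaced K n \<sigma> \<pi>))
        = w ^ card (misplaced K n \<sigma> \<pi>) - (if \<sigma> = \<sigma>\<pi> then 1 else 0)"
      using empty_iff[of \<sigma>] by (cases "\<sigma> = \<sigma>\<pi>") simp_all
  qed simp
  also have "\<dots> = (\<Sum>\<sigma>\<in>?E. w ^ card (misplaced K n \<sigma> \<pi>)) - 1"
    using \<open>\<sigma>\<pi> \<in> ?E\<close> by (simp add: sum_subtractf finite_PiE)
  finally show ?thesis
    unfolding sum_pow_card_misplaced[OF labels] .
qed

definition misplacement_sum :: "real \<Rightarrow> nat \<Rightarrow> nat \<Rightarrow> (nat \<Rightarrow> nat) \<Rightarrow> real" where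
  "misplacement_sum w K n \<sigma> =
     (\<Sum>\<pi>\<in>{..<K} \<rightarrow>\<^sub>E {..<K}. if misplaced K n \<sigma> \<pi> = {} then 0 else w ^ card (misplaced K n \<sigma> \<pi>))"

lemma misplacement_sum_nonneg: "0 \<le> w \<Longrightarrow> 0 \<le> misplacement_sum w K n \<sigma>"
  unfolding misplacement_sum_def by (intro sum_nonneg) simp

lemma sum_misplacement_sum:
  "(\<Sum>\<sigma>\<in>{..<K * n} \<rightarrow>\<^sub>E {..<K}. misplacement_sum w K n \<sigma>) = real K ^ K * ((1 + (real K - 1) * w) ^ (K * n) - 1)"
proof -
  have "(\<Sum>\<sigma>\<in>{..<K * n} \<rightarrow>\<^sub>E {..<K}. misplacement_sum w K n \<sigma>)
      = (\<Sum>\<pi>\<in>{..<K} \<rightarrow>\<^sub>E {..<K}. \<Sum>\<sigma>\<in>{..<K * n} \<rightarrow>\<^sub>E {..<K}.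
           if misplaced K n \<sigma> \<pi> = {} then 0 else w ^ card (misplaced K n \<sigma> \<pi>))"
    unfolding misplacement_sum_def by (rule sum.swap)
  also have "\<dots> = (\<Sum>\<pi>\<in>{..<K} \<rightarrow>\<^sub>E {..<K}. (1 + (real K - 1) * w) ^ (K * n) - 1)"
  proof (rule sum.cong)
    fix \<pi> :: "nat \<Rightarrow> nat" assume "\<pi> \<in> {..<K} \<rightarrow>\<^sub>E {..<K}"
    then have "\<forall>i<K. \<pi> i < K"
      by (auto dest: PiE_mem)
    then show "(\<Sum>\<sigma>\<in>{..<K * n} \<rightarrow>\<^sub>E {..<K}. if misplaced K n \<sigma> \<pi> = {} then 0 else w ^ card (misplaced K n \<sigma> \<pi>))
        = (1 + (real K - 1) * w) ^ (K * n) - 1"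
      by (rule sum_pow_card_misplaced_nonempty)
  qed simp
  finally show ?thesis
    by (simp add: card_PiE)
qed

lemma exp_card_disagreement_pairs_le:
  fixes \<epsilon> s :: real
  assumes "0 < n" and "\<epsilon> < 1/2" and "\<sigma> \<in> wrong_partitions K n" and "0 \<le> s"
  shows "exp (- s * card (disagreement_pairs K n \<sigma>))
           \<le> misplacement_sum (exp (- 2 * s * (1 - \<epsilon>) * n)) K n \<sigma> + exp (- s * \<epsilon> * n * n / 2)"
  using assms(1-3)
proof (cases rule: disagreement_pairs_dichotomy)
  case (1 \<pi>)
  let ?w = "exp (- 2 * s * (1 - \<epsilon>) * n)"
  have "exp (- s * card (disagreement_pairs K n \<sigma>)) \<le> exp (- s * (2 * (1 - \<epsilon>) * n * card (misplaced K n \<sigma> \<pi>)))"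
    using mult_left_mono[OF 1(3) assms(4)] by simp
  also have "\<dots> = (if misplaced K n \<sigma> \<pi> = {} then 0 else ?w ^ card (misplaced K n \<sigma> \<pi>))"
    using 1(2) by (simp add: exp_of_nat_mult[symmetric] algebra_simps)
  also have "\<dots> \<le> misplacement_sum ?w K n \<sigma>"
    unfolding misplacement_sum_def using 1(1) by (intro member_le_sum) (simp_all add: finite_PiE)
  finally show ?thesis
    using exp_ge_zero[of "- s * \<epsilon> * n * n / 2"] by linarith
next
  case 2
  then have "exp (- s * card (disagreement_pairs K n \<sigma>)) \<le> exp (- s * \<epsilon> * n * n / 2)"
    using mult_left_mono[OF 2 assms(4)] by simp
  moreover have "0 \<le> misplacement_sum (exp (- 2 * s * (1 - \<epsilon>) * n)) K n \<sigma>"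
    by (simp add: misplacement_sum_nonneg)
  ultimately show ?thesis
    by linarith
qed

lemma sum_pow_card_disagreement_pairs_le:
  fixes \<epsilon> r s :: real
  assumes "0 < n" and "\<epsilon> < 1/2" and "0 \<le> r" and "r \<le> exp (- s)" and "0 \<le> s"
  shows "(\<Sum>\<sigma>\<in>wrong_partitions K n. r ^ card (disagreement_pairs K n \<sigma>))
      \<le> real K ^ K * ((1 + (real K - 1) * exp (- 2 * s * (1 - \<epsilon>) * n)) ^ (K * n) - 1)
        + real K ^ (K * n) * exp (- s * \<epsilon> * n * n / 2)"
proof -
  let ?E = "{..<K * n} \<rightarrow>\<^sub>E {..<K}"
  let ?M = "misplacement_sum (exp (- 2 * s * (1 - \<epsilon>) * n)) K n"
  let ?X = "exp (- s * \<epsilon> * n * n / 2)"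
  have pow_le_exp: "r ^ m \<le> exp (- s * m)" for m :: nat
  proof -
    have "r ^ m \<le> exp (- s) ^ m"
      using assms(3,4) by (intro power_mono)
    then show ?thesis
      by (simp add: exp_of_nat_mult[symmetric] mult.commute)
  qed
  have "(\<Sum>\<sigma>\<in>wrong_partitions K n. r ^ card (disagreement_pairs K n \<sigma>)) \<le> (\<Sum>\<sigma>\<in>wrong_partitions K n. ?M \<sigma> + ?X)"
  proof (rule sum_mono)
    fix \<sigma> assume "\<sigma> \<in> wrong_partitions K n"
    then show "r ^ card (disagreement_pairs K n \<sigma>) \<le> ?M \<sigma> + ?X"
      using pow_le_exp exp_card_disagreement_pairs_le[OF assms(1,2) _ assms(5)] by (blast intro: order.trans)
  qed
  also have "\<dots> \<le> (\<Sum>\<sigma>\<in>?E. ?M \<sigma> + ?X)"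
  proof (rule sum_mono2)
    show "finite ?E"
      by (simp add: finite_PiE)
    show "wrong_partitions K n \<subseteq> ?E"
      by (auto simp: wrong_partitions_def)
    show "0 \<le> ?M \<sigma> + ?X" for \<sigma>
      using misplacement_sum_nonneg[of _ K n \<sigma>] by (simp add: add_nonneg_nonneg)
  qed
  also have "\<dots> = real K ^ K * ((1 + (real K - 1) * exp (- 2 * s * (1 - \<epsilon>) * n)) ^ (K * n) - 1)
        + real (card ?E) * ?X"
    by (simp add: sum.distrib sum_misplacement_sum)
  also have "real (card ?E) = real K ^ (K * n)"
    by (simp add: card_PiE)
  finally show ?thesis .
qed

section \<open>Asymptotics\<close>

lemma wsbm_bhattacharyya_le_exp:
  assumes nonneg: "\<forall>l\<in>{1..L}. 0 \<le> a l \<and> 0 \<le> b l"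
    and "(\<Sum>l=1..L. a l) * ln (real n) / real n \<le> 1"
    and "(\<Sum>l=1..L. b l) * ln (real n) / real n \<le> 1"
  shows "wsbm_bhattacharyya L a b n
           \<le> exp (- ((\<Sum>l=1..L. (sqrt (a l) - sqrt (b l))^2) / 2 * (ln (real n) / real n)))"
proof -
  define t where "t = ln (real n) / real n"
  define u where "u = (\<Sum>l=1..L. a l)"
  define v where "v = (\<Sum>l=1..L. b l)"
  define S where "S = (\<Sum>l=1..L. sqrt (a l) * sqrt (b l))"
  have "0 \<le> t"
    by (cases "n = 0") (simp_all add: t_def)
  have "u * t \<le> 1" "v * t \<le> 1"
    using assms(2,3) by (simp_all add: u_def v_def t_def)
  have "(\<Sum>l=1..L. sqrt (wsbm_dist L a n l * wsbm_dist L b n l)) = (\<Sum>l=1..L. t * (sqrt (a l) * sqrt (b l)))"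
  proof (rule sum.cong)
    fix l assume "l \<in> {1..L}"
    then have "wsbm_dist L a n l * wsbm_dist L b n l = (t * t) * (a l * b l)"
      by (simp add: wsbm_dist_def t_def)
    then show "sqrt (wsbm_dist L a n l * wsbm_dist L b n l) = t * (sqrt (a l) * sqrt (b l))"
      using \<open>0 \<le> t\<close> by (simp add: real_sqrt_mult)
  qed simp
  then have "wsbm_bhattacharyya L a b n = sqrt ((1 - u * t) * (1 - v * t)) + t * S"
    by (simp add: wsbm_bhattacharyya_def sum.atLeast_Suc_atMost wsbm_dist_def u_def v_def t_def S_def
        sum_distrib_left)
  also have "\<dots> \<le> ((1 - u * t) + (1 - v * t)) / 2 + t * S"
    using arith_geo_mean_sqrt[of "1 - u * t" "1 - v * t"] \<open>u * t \<le> 1\<close> \<open>v * t \<le> 1\<close> by simp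
  also have "\<dots> = 1 - (u + v - 2 * S) / 2 * t"
    by (simp add: field_simps)
  also have "u + v - 2 * S = (\<Sum>l=1..L. (sqrt (a l) - sqrt (b l))^2)"
    using nonneg by (simp add: u_def v_def S_def power2_diff sum.distrib sum_subtractf sum_distrib_left mult.assoc)
  also have "1 - (\<Sum>l=1..L. (sqrt (a l) - sqrt (b l))^2) / 2 * t
      \<le> exp (- ((\<Sum>l=1..L. (sqrt (a l) - sqrt (b l))^2) / 2 * t))"
    using exp_ge_add_one_self[of "- ((\<Sum>l=1..L. (sqrt (a l) - sqrt (b l))^2) / 2 * t)"] by simp
  finally show ?thesis
    unfolding t_def .
qed

lemma mle_failure_prob_le:
  fixes L :: nat and a b :: "nat \<Rightarrow> real" and \<epsilon> :: real
  defines "D \<equiv> \<Sum>l=1..L. (sqrt (a l) - sqrt (b l))^2"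
  assumes nonneg: "\<forall>l\<in>{1..L}. 0 \<le> a l \<and> 0 \<le> b l"
    and sparse_a: "(\<Sum>l=1..L. a l) * ln (real n) / real n \<le> 1"
    and sparse_b: "(\<Sum>l=1..L. b l) * ln (real n) / real n \<le> 1"
    and "0 < n" and "\<epsilon> < 1/2"
  shows "mle_failure_prob K L a b n
    \<le> real K ^ K * ((1 + (real K - 1) * real n powr - (D * (1 - \<epsilon>))) ^ (K * n) - 1)
      + real K ^ (K * n) * exp (- (D * \<epsilon> / 4) * n * ln n)"
proof -
  define s where "s = D / 2 * (ln (real n) / real n)"
  have valid: "wsbm_valid L a b n"
    using nonneg sparse_a sparse_b by (rule wsbm_validI)
  have "0 \<le> s"
    using \<open>0 < n\<close> by (simp add: s_def D_def sum_nonneg)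
  have "mle_failure_prob K L a b n
      \<le> (\<Sum>\<sigma>\<in>wrong_partitions K n. wsbm_bhattacharyya L a b n ^ card (disagreement_pairs K n \<sigma>))"
    using valid by (rule mle_failure_prob_le_sum_pow)
  also have "\<dots> \<le> real K ^ K * ((1 + (real K - 1) * exp (- 2 * s * (1 - \<epsilon>) * n)) ^ (K * n) - 1)
        + real K ^ (K * n) * exp (- s * \<epsilon> * n * n / 2)"
  proof (rule sum_pow_card_disagreement_pairs_le)
    show "0 \<le> wsbm_bhattacharyya L a b n"
      using valid by (rule wsbm_bhattacharyya_nonneg)
    show "wsbm_bhattacharyya L a b n \<le> exp (- s)"
      unfolding s_def D_def using nonneg sparse_a sparse_b by (rule wsbm_bhattacharyya_le_exp)
  qed (use \<open>0 < n\<close> \<open>\<epsilon> < 1/2\<close> \<open>0 \<le> s\<close> in auto)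
  also have "exp (- 2 * s * (1 - \<epsilon>) * n) = real n powr - (D * (1 - \<epsilon>))"
    using \<open>0 < n\<close> by (simp add: s_def powr_def)
  also have "exp (- s * \<epsilon> * n * n / 2) = exp (- (D * \<epsilon> / 4) * n * ln n)"
    using \<open>0 < n\<close> by (simp add: s_def)
  finally show ?thesis .
qed

lemma wsbm_failure_bound_tendsto_0:
  fixes c B :: real
  assumes "0 < K" and "1 < c" and "0 < B"
  shows "(\<lambda>n. real K ^ K * ((1 + (real K - 1) * real n powr - c) ^ (K * n) - 1)
             + real K ^ (K * n) * exp (- B * n * ln n)) \<longlonglongrightarrow> 0"
proof -
  have "(\<lambda>n. real K ^ K * ((1 + (real K - 1) * real n powr - c) powr (real K * real n) - 1)
           + exp (real K * ln (real K) * real n - B * real n * ln (real n))) \<longlonglongrightarrow> 0"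
    using assms(2,3) by real_asymp
  moreover have "real K ^ K * ((1 + (real K - 1) * real n powr - c) powr (real K * real n) - 1)
        + exp (real K * ln (real K) * real n - B * real n * ln (real n))
      = real K ^ K * ((1 + (real K - 1) * real n powr - c) ^ (K * n) - 1)
        + real K ^ (K * n) * exp (- B * n * ln n)" for n
  proof -
    have "0 < 1 + (real K - 1) * real n powr - c"
      using assms(1) by (simp add: add_pos_nonneg)
    then have "(1 + (real K - 1) * real n powr - c) powr (real K * real n)
        = (1 + (real K - 1) * real n powr - c) ^ (K * n)"
      by (simp add: powr_realpow[symmetric])
    moreover have "real K ^ (K * n) = exp (real (K * n) * ln (real K))"
      using assms(1) by (simp only: exp_of_nat_mult exp_ln of_nat_0_less_iff)
    then have "real K ^ (K * n) = exp (real K * ln (real K) * real n)"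
      by (simp add: algebra_simps)
    ultimately show ?thesis
      by (simp add: exp_diff exp_minus field_simps)
  qed
  ultimately show ?thesis
    by simp
qed

lemma eventually_mle_failure_prob_le:
  fixes L :: nat and a b :: "nat \<Rightarrow> real" and \<epsilon> :: real
  defines "D \<equiv> \<Sum>l=1..L. (sqrt (a l) - sqrt (b l))^2"
  assumes nonneg: "\<forall>l\<in>{1..L}. 0 \<le> a l \<and> 0 \<le> b l" and "\<epsilon> < 1/2"
  shows "\<forall>\<^sub>F n in sequentially. 0 \<le> mle_failure_prob K L a b n \<and> mle_failure_prob K L a b n
           \<le> real K ^ K * ((1 + (real K - 1) * real n powr - (D * (1 - \<epsilon>))) ^ (K * n) - 1)
             + real K ^ (K * n) * exp (- (D * \<epsilon> / 4) * n * ln n)"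
proof -
  have "((\<lambda>n. u * ln (real n) / real n) \<longlongrightarrow> 0) sequentially" for u :: real
    by real_asymp
  from order_tendstoD(2)[OF this, of 1]
  have "\<forall>\<^sub>F n in sequentially. u * ln (real n) / real n < 1" for u
    by simp
  from eventually_gt_at_top[of 0] this[of "\<Sum>l=1..L. a l"] this[of "\<Sum>l=1..L. b l"]
  show ?thesis
  proof eventually_elim
    case (elim n)
    then have "wsbm_valid L a b n"
      using nonneg by (intro wsbm_validI) auto
    moreover have "mle_failure_prob K L a b n
        \<le> real K ^ K * ((1 + (real K - 1) * real n powr - (D * (1 - \<epsilon>))) ^ (K * n) - 1)
          + real K ^ (K * n) * exp (- (D * \<epsilon> / 4) * n * ln n)"
      unfolding D_def by (rule mle_failure_prob_le) (use elim nonneg \<open>\<epsilon> < 1/2\<close> in auto)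
    ultimately show ?case
      by (simp add: mle_failure_prob_nonneg)
  qed
qed

lemma mle_failure_prob_tendsto_0:
  fixes L :: nat and a b :: "nat \<Rightarrow> real" and \<epsilon> :: real
  defines "D \<equiv> \<Sum>l=1..L. (sqrt (a l) - sqrt (b l))^2"
  assumes "0 < K" and nonneg: "\<forall>l\<in>{1..L}. 0 \<le> a l \<and> 0 \<le> b l"
    and "0 < \<epsilon>" and "\<epsilon> < 1/2" and "1 < D * (1 - \<epsilon>)"
  shows "(\<lambda>n. mle_failure_prob K L a b n) \<longlonglongrightarrow> 0"
proof -
  define bound where "bound n = real K ^ K * ((1 + (real K - 1) * real n powr - (D * (1 - \<epsilon>))) ^ (K * n) - 1)
      + real K ^ (K * n) * exp (- (D * \<epsilon> / 4) * n * ln n)" for n :: nat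
  have bounds: "\<forall>\<^sub>F n in sequentially. 0 \<le> mle_failure_prob K L a b n \<and> mle_failure_prob K L a b n \<le> bound n"
    unfolding bound_def D_def using nonneg \<open>\<epsilon> < 1/2\<close> by (rule eventually_mle_failure_prob_le)
  have "0 < D * (1 - \<epsilon>)" and "0 < 1 - \<epsilon>"
    using \<open>1 < D * (1 - \<epsilon>)\<close> \<open>\<epsilon> < 1/2\<close> by linarith+
  then have "0 < D * \<epsilon> / 4"
    using \<open>0 < \<epsilon>\<close> by (simp add: zero_less_mult_iff)
  with \<open>0 < K\<close> \<open>1 < D * (1 - \<epsilon>)\<close> have "bound \<longlonglongrightarrow> 0"
    unfolding bound_def by (rule wsbm_failure_bound_tendsto_0)
  show ?thesis
  proof (rule tendsto_sandwich[of "\<lambda>_. 0" _ _ bound])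
    show "\<forall>\<^sub>F n in sequentially. 0 \<le> mle_failure_prob K L a b n"
      using bounds by (rule eventually_mono) simp
    show "\<forall>\<^sub>F n in sequentially. mle_failure_prob K L a b n \<le> bound n"
      using bounds by (rule eventually_mono) simp
  qed (simp_all add: \<open>bound \<longlonglongrightarrow> 0\<close>)
qed

theorem theorem3:
  fixes K L :: nat and a b :: "nat \<Rightarrow> real"
  assumes "K \<ge> 2" and "L \<ge> 1"
    and "\<forall>l\<in>{1..L}. a l \<ge> 0 \<and> b l \<ge> 0"
    and "(\<Sum>l=1..L. (sqrt (a l) - sqrt (b l))^2) > 1"
  shows "(\<lambda>n. mle_success_prob K L a b n) \<longlonglongrightarrow> 1"
proof -
  define D where "D = (\<Sum>l=1..L. (sqrt (a l) - sqrt (b l))^2)"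
  define \<epsilon> where "\<epsilon> = (D - 1) / (2 * D)"
  have "1 < D"
    using assms(4) by (simp add: D_def)
  then have "0 < \<epsilon>" "\<epsilon> < 1/2" "1 < D * (1 - \<epsilon>)"
    by (simp_all add: \<epsilon>_def field_simps)
  moreover have "0 < K"
    using assms(1) by simp
  ultimately have "(\<lambda>n. mle_failure_prob K L a b n) \<longlonglongrightarrow> 0"
    using assms(3) unfolding D_def by (intro mle_failure_prob_tendsto_0)
  then have "(\<lambda>n. 1 - mle_failure_prob K L a b n) \<longlonglongrightarrow> 1 - 0"
    by (intro tendsto_diff tendsto_const)
  then show ?thesis
    by (simp add: mle_success_prob_eq)
qed

end
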